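(* For $(s_n,x_n),(s,x)\in T\times[0,\infty)$, as $n\to\infty$, $$\rho_2((s_n,x_n),(s,x))\to0\iff\big[x_n\to x\ \text{and}\ x\,(R_{s_n,s}(1,1)-1)\to0\big].$$
   Context: $(U_1(t))_{t\in T}$ is a process with uniform $(0,1)$ margins such that the bivariate tail copulas $R_{s,t}(x,y)=\lim_{u\downarrow0}u^{-1}\mathbb{P}\{U_1(s)\le ux,U_1(t)\le uy\}$ exist for all $s,t\in T$, $x,y\ge0$. $\rho_2((s,x),(t,y))=(x-2R_{s,t}(x,y)+y)^{1/2}$, the standard deviation semimetric of a centered Gaussian process $W$ on $T\times[0,\infty)$ with covariance $R_{s,t}(x,y)$. *)

theory Defs
  imports "HOL-Probability.Probability"
begin

text \<open>Tail copula of the process U at (s,t), evaluated at (x,y): the limit as u tends to 0 from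
the right of u^{-1} P(U(s) \<le> u x, U(t) \<le> u y).\<close>
definition tail_copula_quot :: "'a measure \<Rightarrow> ('T \<Rightarrow> 'a \<Rightarrow> real) \<Rightarrow> 'T \<Rightarrow> 'T \<Rightarrow> real \<Rightarrow> real \<Rightarrow> real \<Rightarrow> real" where
  "tail_copula_quot M U s t x y u =
     measure M {\<omega> \<in> space M. U s \<omega> \<le> u * x \<and> U t \<omega> \<le> u * y} / u"

definition rho2 :: "('T \<Rightarrow> 'T \<Rightarrow> real \<Rightarrow> real \<Rightarrow> real) \<Rightarrow> 'T \<times> real \<Rightarrow> 'T \<times> real \<Rightarrow> real" where
  "rho2 R p q = sqrt (snd p - 2 * R (fst p) (fst q) (snd p) (snd q) + snd q)"

end

theory Submission
  imports Defs
begin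

text \<open>
  From the finite-level quotients the tail copula inherits 0 \<le> R_{s,t}(a,b) \<le> min a b,
  1-Lipschitz dependence on its first argument (the margins are uniform) and positive
  homogeneity (substitute u \<mapsto> c u in the limit). Hence
  rho^2 = (x_n - x) - 2 x (R_{s_n,s}(1,1) - 1) - 2 (R_{s_n,s}(x_n,x) - R_{s_n,s}(x,x)),
  where |x_n - x| \<le> rho^2 and the last term is at most 2 |x_n - x| in absolute value, so rho^2
  and |x_n - x| + |x (R_{s_n,s}(1,1) - 1)| are bounded by constant multiples of each other.
\<close>

lemma eventually_at_right_0_mult_le_1:
  fixes c :: real
  shows "\<forall>\<^sub>F u in at_right 0. 0 < u \<and> u * c \<le> 1"
proof -
  have "((\<lambda>u. u * c) \<longlongrightarrow> 0 * c) (at_right 0)"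
    by (intro tendsto_intros)
  then have "\<forall>\<^sub>F u in at_right 0. u * c < 1"
    by (rule order_tendstoD) simp
  with eventually_at_right_less[of "0::real"] show ?thesis
    by eventually_elim simp
qed

lemma (in finite_measure) measure_Int_diff_le:
  assumes "A \<in> sets M" "A' \<in> sets M" "B \<in> sets M" "A' \<subseteq> A"
  shows "measure M (A \<inter> B) - measure M (A' \<inter> B) \<le> measure M A - measure M A'"
proof -
  have "measure M (A \<inter> B) \<le> measure M ((A' \<inter> B) \<union> (A - A'))"
    using assms by (intro finite_measure_mono) auto
  also have "\<dots> \<le> measure M (A' \<inter> B) + measure M (A - A')"
    using assms by (intro measure_subadditive) auto
  also have "measure M (A - A') = measure M A - measure M A'"
    by (rule finite_measure_Diff[OF assms(1,2,4)])
  finally show ?thesis by simp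
qed

lemma tail_copula_quot_commute:
  "tail_copula_quot M U s t a b = tail_copula_quot M U t s b a"
  by (auto simp: tail_copula_quot_def fun_eq_iff conj_commute)

lemma tail_copula_quot_nonneg: "0 \<le> u \<Longrightarrow> 0 \<le> tail_copula_quot M U s t a b u"
  by (simp add: tail_copula_quot_def)

locale tail_copula_process = prob_space M for M :: "'a measure" +
  fixes U :: "'T \<Rightarrow> 'a \<Rightarrow> real" and R :: "'T \<Rightarrow> 'T \<Rightarrow> real \<Rightarrow> real \<Rightarrow> real"
  assumes U_measurable[measurable]: "\<And>t. U t \<in> borel_measurable M"
    and uniform_margins: "\<And>t u. 0 \<le> u \<Longrightarrow> u \<le> 1 \<Longrightarrow> measure M {\<omega> \<in> space M. U t \<omega> \<le> u} = u"
    and tail_copula_limit: "\<And>s t a b. 0 \<le> a \<Longrightarrow> 0 \<le> b \<Longrightarrow>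
           (tail_copula_quot M U s t a b \<longlongrightarrow> R s t a b) (at_right 0)"
begin

lemma tail_copula_quot_le:
  assumes "0 < u" "u * a \<le> 1" "0 \<le> a"
  shows "tail_copula_quot M U s t a b u \<le> a"
proof -
  have "measure M {\<omega> \<in> space M. U s \<omega> \<le> u * a \<and> U t \<omega> \<le> u * b}
        \<le> measure M {\<omega> \<in> space M. U s \<omega> \<le> u * a}"
    by (rule finite_measure_mono) auto
  also have "\<dots> = u * a"
    using assms by (intro uniform_margins) auto
  finally show ?thesis
    using assms by (simp add: tail_copula_quot_def divide_simps mult.commute)
qed

lemma tail_copula_quot_diff_le:
  assumes "0 < u" "u * a \<le> 1" "0 \<le> a'" "a' \<le> a"
  shows "0 \<le> tail_copula_quot M U s t a b u - tail_copula_quot M U s t a' b u"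
    and "tail_copula_quot M U s t a b u - tail_copula_quot M U s t a' b u \<le> a - a'"
proof -
  define A where "A c = {\<omega> \<in> space M. U s \<omega> \<le> u * c}" for c
  define B where "B = {\<omega> \<in> space M. U t \<omega> \<le> u * b}"
  have sets: "A c \<in> sets M" "B \<in> sets M" for c
    unfolding A_def B_def by measurable
  have ua: "u * a' \<le> u * a"
    using assms by (intro mult_left_mono) auto
  then have sub: "A a' \<subseteq> A a"
    by (auto simp: A_def)
  have "u * a' \<le> 1"
    using ua assms(2) by linarith
  then have margins: "measure M (A a) = u * a" "measure M (A a') = u * a'"
    unfolding A_def using assms by (simp_all add: uniform_margins)
  have quot: "tail_copula_quot M U s t c b u = measure M (A c \<inter> B) / u" for c
    by (simp add: tail_copula_quot_def A_def B_def Collect_conj_eq Int_assoc[symmetric] Int_absorb)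
  have "measure M (A a' \<inter> B) \<le> measure M (A a \<inter> B)"
    using sub sets by (intro finite_measure_mono) auto
  then show "0 \<le> tail_copula_quot M U s t a b u - tail_copula_quot M U s t a' b u"
    using assms(1) by (simp add: quot divide_right_mono)
  have "measure M (A a \<inter> B) - measure M (A a' \<inter> B) \<le> u * (a - a')"
    using measure_Int_diff_le[OF sets(1,1,2) sub] by (simp add: margins right_diff_distrib)
  then show "tail_copula_quot M U s t a b u - tail_copula_quot M U s t a' b u \<le> a - a'"
    using assms(1) by (simp add: quot diff_divide_distrib[symmetric] pos_divide_le_eq mult.commute)
qed

lemma tail_copula_nonneg:
  assumes "0 \<le> a" "0 \<le> b"
  shows "0 \<le> R s t a b"
proof (rule tendsto_lowerbound[OF tail_copula_limit[OF assms]])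
  show "\<forall>\<^sub>F u in at_right 0. 0 \<le> tail_copula_quot M U s t a b u"
    using eventually_at_right_less[of "0::real"] by eventually_elim (simp add: tail_copula_quot_nonneg)
qed simp

lemma tail_copula_le_left:
  assumes "0 \<le> a" "0 \<le> b"
  shows "R s t a b \<le> a"
proof (rule tendsto_upperbound[OF tail_copula_limit[OF assms]])
  show "\<forall>\<^sub>F u in at_right 0. tail_copula_quot M U s t a b u \<le> a"
    using eventually_at_right_0_mult_le_1[of a]
    by eventually_elim (simp add: tail_copula_quot_le assms)
qed simp

lemma tail_copula_commute:
  assumes "0 \<le> a" "0 \<le> b"
  shows "R s t a b = R t s b a"
  using tail_copula_limit[OF assms, of s t] tail_copula_limit[OF assms(2,1), of t s]
  by (intro tendsto_unique[of "at_right 0"]) (simp_all add: tail_copula_quot_commute)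

lemma tail_copula_le_right: "0 \<le> a \<Longrightarrow> 0 \<le> b \<Longrightarrow> R s t a b \<le> b"
  using tail_copula_le_left[of b a t s] by (simp add: tail_copula_commute)

lemma tail_copula_lipschitz_left:
  assumes "0 \<le> a" "0 \<le> a'" "0 \<le> b"
  shows "\<bar>R s t a b - R s t a' b\<bar> \<le> \<bar>a - a'\<bar>"
proof -
  have bounds: "0 \<le> R s t a b - R s t a' b \<and> R s t a b - R s t a' b \<le> a - a'"
    if "0 \<le> a'" "a' \<le> a" for a a'
  proof -
    have lim: "((\<lambda>u. tail_copula_quot M U s t a b u - tail_copula_quot M U s t a' b u)
        \<longlongrightarrow> R s t a b - R s t a' b) (at_right 0)"
      using that assms(3) by (intro tendsto_diff tail_copula_limit) auto
    have ev: "\<forall>\<^sub>F u in at_right 0.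
        0 \<le> tail_copula_quot M U s t a b u - tail_copula_quot M U s t a' b u \<and>
        tail_copula_quot M U s t a b u - tail_copula_quot M U s t a' b u \<le> a - a'"
      using eventually_at_right_0_mult_le_1[of a]
      by eventually_elim (use tail_copula_quot_diff_le that in blast)
    have "0 \<le> R s t a b - R s t a' b"
      by (rule tendsto_lowerbound[OF lim]) (use ev in \<open>auto elim: eventually_mono\<close>)
    moreover have "R s t a b - R s t a' b \<le> a - a'"
      by (rule tendsto_upperbound[OF lim]) (use ev in \<open>auto elim: eventually_mono\<close>)
    ultimately show ?thesis ..
  qed
  show ?thesis
    using bounds[of a' a] bounds[of a a'] assms by (cases "a' \<le> a") auto
qed

lemma tail_copula_homogeneous:
  assumes "0 \<le> c" "0 \<le> a" "0 \<le> b"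
  shows "R s t (c * a) (c * b) = c * R s t a b"
proof (cases "c = 0")
  case True
  then show ?thesis
    using tail_copula_nonneg[of 0 0 s t] tail_copula_le_left[of 0 0 s t] by simp
next
  case False
  with assms have "0 < c" by simp
  have rescale: "tail_copula_quot M U s t (c * a) (c * b)
      = (\<lambda>u. c * tail_copula_quot M U s t a b (c * u))"
    using \<open>0 < c\<close> by (auto simp: tail_copula_quot_def fun_eq_iff ac_simps)
  have "filterlim (\<lambda>u. c * u) (at_right 0) (at_right (0::real))"
    using filterlim_times_pos[OF filterlim_ident \<open>0 < c\<close>, of 0] by simp
  then have "((\<lambda>u. c * tail_copula_quot M U s t a b (c * u)) \<longlongrightarrow> c * R s t a b) (at_right 0)"
    using assms by (intro tendsto_mult tendsto_const filterlim_compose[OF tail_copula_limit])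
  then have "(tail_copula_quot M U s t (c * a) (c * b) \<longlongrightarrow> c * R s t a b) (at_right 0)"
    unfolding rescale .
  moreover have "(tail_copula_quot M U s t (c * a) (c * b) \<longlongrightarrow> R s t (c * a) (c * b)) (at_right 0)"
    using assms by (intro tail_copula_limit) simp_all
  ultimately show ?thesis
    using trivial_limit_at_right_real tendsto_unique by blast
qed

lemma rho2_radicand_nonneg:
  assumes "0 \<le> x" "0 \<le> y"
  shows "0 \<le> x - 2 * R s t x y + y"
  using tail_copula_le_left[OF assms, of s t] tail_copula_le_right[OF assms, of s t] by linarith

lemma rho2_nonneg: "0 \<le> x \<Longrightarrow> 0 \<le> y \<Longrightarrow> 0 \<le> rho2 R (s, x) (t, y)"
  by (simp add: rho2_def rho2_radicand_nonneg)

lemma rho2_squared: "0 \<le> x \<Longrightarrow> 0 \<le> y \<Longrightarrow> (rho2 R (s, x) (t, y))\<^sup>2 = x - 2 * R s t x y + y"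
  by (simp add: rho2_def rho2_radicand_nonneg)

lemma rho2_squared_bounds:
  fixes s t :: 'T
  assumes x: "0 \<le> x" and y: "0 \<le> y"
  shows "\<bar>x - y\<bar> \<le> (rho2 R (s, x) (t, y))\<^sup>2"
    and "\<bar>y * (R s t 1 1 - 1)\<bar> \<le> 2 * (rho2 R (s, x) (t, y))\<^sup>2"
    and "(rho2 R (s, x) (t, y))\<^sup>2 \<le> 3 * \<bar>x - y\<bar> + 2 * \<bar>y * (R s t 1 1 - 1)\<bar>"
proof -
  have R_le: "R s t x y \<le> x" "R s t x y \<le> y"
    using tail_copula_le_left[OF x y] tail_copula_le_right[OF x y] by auto
  have "R s t y y = y * R s t 1 1"
    using tail_copula_homogeneous[OF y, of 1 1 s t] by simp
  moreover have "\<bar>R s t x y - R s t y y\<bar> \<le> \<bar>x - y\<bar>"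
    using x y y by (rule tail_copula_lipschitz_left)
  ultimately have lip: "\<bar>R s t x y - y * R s t 1 1\<bar> \<le> \<bar>x - y\<bar>"
    by simp
  show "\<bar>x - y\<bar> \<le> (rho2 R (s, x) (t, y))\<^sup>2"
    and "\<bar>y * (R s t 1 1 - 1)\<bar> \<le> 2 * (rho2 R (s, x) (t, y))\<^sup>2"
    and "(rho2 R (s, x) (t, y))\<^sup>2 \<le> 3 * \<bar>x - y\<bar> + 2 * \<bar>y * (R s t 1 1 - 1)\<bar>"
    unfolding rho2_squared[OF x y]
    using R_le lip by (simp_all add: abs_if right_diff_distrib split: if_splits)
qed

end

lemma tendsto_sqrt_zero_iff:
  assumes "\<And>n. 0 \<le> f n"
  shows "((\<lambda>n. sqrt (f n)) \<longlongrightarrow> 0) F \<longleftrightarrow> (f \<longlongrightarrow> 0) F"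
proof
  assume "((\<lambda>n. sqrt (f n)) \<longlongrightarrow> 0) F"
  then have "((\<lambda>n. (sqrt (f n))\<^sup>2) \<longlongrightarrow> 0\<^sup>2) F"
    by (intro tendsto_intros)
  with assms show "(f \<longlongrightarrow> 0) F" by simp
qed (use tendsto_real_sqrt[of f 0 F] in simp)

theorem lemmaA5:
  fixes M :: "'a measure" and U :: "'T \<Rightarrow> 'a \<Rightarrow> real"
    and R :: "'T \<Rightarrow> 'T \<Rightarrow> real \<Rightarrow> real \<Rightarrow> real"
    and s :: "nat \<Rightarrow> 'T" and x :: "nat \<Rightarrow> real" and s0 :: 'T and x0 :: real
  assumes "prob_space M"
    and "\<And>t. U t \<in> borel_measurable M"
    and "\<And>t u. 0 \<le> u \<Longrightarrow> u \<le> 1 \<Longrightarrow> measure M {\<omega> \<in> space M. U t \<omega> \<le> u} = u"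
    and "\<And>s t a b. 0 \<le> a \<Longrightarrow> 0 \<le> b \<Longrightarrow>
           (tail_copula_quot M U s t a b \<longlongrightarrow> R s t a b) (at_right 0)"
    and "\<And>n. 0 \<le> x n" and "0 \<le> x0"
  shows "((\<lambda>n. rho2 R (s n, x n) (s0, x0)) \<longlonglongrightarrow> 0) \<longleftrightarrow>
         (x \<longlonglongrightarrow> x0 \<and> (\<lambda>n. x0 * (R (s n) s0 1 1 - 1)) \<longlonglongrightarrow> 0)"
proof -
  interpret tail_copula_process M U R
    using assms(1-4) by (simp add: tail_copula_process_def tail_copula_process_axioms_def)
  define \<rho> where "\<rho> n = (rho2 R (s n, x n) (s0, x0))\<^sup>2" for n
  define e where "e n = x0 * (R (s n) s0 1 1 - 1)" for n
  have bounds: "\<bar>x n - x0\<bar> \<le> \<rho> n" "\<bar>e n\<bar> \<le> 2 * \<rho> n"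
      "\<rho> n \<le> 3 * \<bar>x n - x0\<bar> + 2 * \<bar>e n\<bar>" for n
    unfolding \<rho>_def e_def by (rule rho2_squared_bounds[OF assms(5,6)])+
  have rho2_eq: "rho2 R (s n, x n) (s0, x0) = sqrt (\<rho> n)" for n
    using rho2_nonneg[OF assms(5,6)] by (simp add: \<rho>_def)
  have "((\<lambda>n. rho2 R (s n, x n) (s0, x0)) \<longlonglongrightarrow> 0) \<longleftrightarrow> \<rho> \<longlonglongrightarrow> 0"
    unfolding rho2_eq by (rule tendsto_sqrt_zero_iff) (simp add: \<rho>_def)
  also have "\<dots> \<longleftrightarrow> (\<lambda>n. x n - x0) \<longlonglongrightarrow> 0 \<and> e \<longlonglongrightarrow> 0"
  proof safe
    assume "\<rho> \<longlonglongrightarrow> 0"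
    then have "(\<lambda>n. 2 * \<rho> n) \<longlonglongrightarrow> 0"
      using tendsto_mult_right_zero by blast
    then show "e \<longlonglongrightarrow> 0"
      by (rule Lim_null_comparison[rotated, OF _ always_eventually]) (simp add: bounds(2))
    show "(\<lambda>n. x n - x0) \<longlonglongrightarrow> 0"
      using \<open>\<rho> \<longlonglongrightarrow> 0\<close>
      by (rule Lim_null_comparison[rotated, OF _ always_eventually]) (simp add: bounds(1))
  next
    assume "(\<lambda>n. x n - x0) \<longlonglongrightarrow> 0" "e \<longlonglongrightarrow> 0"
    then have "(\<lambda>n. 3 * \<bar>x n - x0\<bar> + 2 * \<bar>e n\<bar>) \<longlonglongrightarrow> 3 * \<bar>0\<bar> + 2 * \<bar>0\<bar>"
      by (intro tendsto_intros)
    then have "(\<lambda>n. 3 * \<bar>x n - x0\<bar> + 2 * \<bar>e n\<bar>) \<longlonglongrightarrow> 0"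
      by simp
    then show "\<rho> \<longlonglongrightarrow> 0"
      by (rule Lim_null_comparison[rotated, OF _ always_eventually])
        (use bounds(3) in \<open>simp add: \<rho>_def\<close>)
  qed
  finally show ?thesis
    by (simp add: LIM_zero_iff e_def[abs_def])
qed

end
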